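(* Let $X, Y \subseteq \omega$, let $\mathcal{A}$ be a pca, let $a_\bot \neq a_\top$ be elements of $\mathcal{A}$, let $\gamma : \omega \to \mathcal{A}$ be a partial numbering, and let $d$ be a $Y$-computable $(a_\bot, a_\top)$-decider for $X$. If $\gamma$ has $Y$-c.e. inequivalence, then $X \le_T Y$.
   Context: A pca is a set with a partial binary application operation containing distinct $\mathrm{s},\mathrm{k}$ with $\mathrm{k}ab\downarrow=a$, $\mathrm{s}ab\downarrow$, $\mathrm{s}abc\simeq(ac)(bc)$. A partial numbering of $\mathcal{A}$ is a surjective partial function $\gamma:\omega\rightharpoonup\mathcal{A}$. $\gamma$ has $Y$-c.e. inequivalence if there is a $Y$-c.e. relation $R\subseteq\omega^2$ whose restriction to $\mathrm{dom}(\gamma)^2$ equals $\{(n,m)\in\mathrm{dom}(\gamma)^2:\gamma(n)\neq\gamma(m)\}$. A function $d:\omega\to\omega$ is an $(a_\bot,a_\top)$-decider for $X$ if for all $n$: $n\notin X\Rightarrow\gamma(d(n))=a_\bot$, and $n\in X\Rightarrow\gamma(d(n))=a_\top$. *)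

theory Defs
  imports Main "HOL-Library.Nat_Bijection"
begin

text \<open>A pca with carrier the type 'a, partial application app, and combinators s, k.
  Option equality is Kleene equality.\<close>

definition pca :: "('a \<Rightarrow> 'a \<Rightarrow> 'a option) \<Rightarrow> 'a \<Rightarrow> 'a \<Rightarrow> bool" where
  "pca app s k \<longleftrightarrow>
     s \<noteq> k \<and>
     (\<forall>a b. Option.bind (app k a) (\<lambda>ka. app ka b) = Some a) \<and>
     (\<forall>a b. Option.bind (app s a) (\<lambda>sa. app sa b) \<noteq> None) \<and>
     (\<forall>a b c.
        Option.bind (app s a) (\<lambda>sa. Option.bind (app sa b) (\<lambda>sab. app sab c)) =
        Option.bind (app a c) (\<lambda>u. Option.bind (app b c) (\<lambda>v. app u v)))"

text \<open>Unary partial functions on nat; tuples are coded with Cantor pairing prod_encode.\<close>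

fun prim_iter :: "(nat \<Rightarrow> nat option) \<Rightarrow> (nat \<Rightarrow> nat option) \<Rightarrow> nat \<Rightarrow> nat \<Rightarrow> nat option" where
  "prim_iter f g x 0 = f x"
| "prim_iter f g x (Suc k) =
     Option.bind (prim_iter f g x k) (\<lambda>r. g (prod_encode (x, prod_encode (k, r))))"

definition mu_op :: "(nat \<Rightarrow> nat option) \<Rightarrow> nat \<Rightarrow> nat option" where
  "mu_op f x =
     (if \<exists>n. f (prod_encode (x, n)) = Some 0 \<and> (\<forall>m<n. f (prod_encode (x, m)) \<noteq> None)
      then Some (LEAST n. f (prod_encode (x, n)) = Some 0 \<and> (\<forall>m<n. f (prod_encode (x, m)) \<noteq> None))
      else None)"

inductive orec :: "nat set \<Rightarrow> (nat \<Rightarrow> nat option) \<Rightarrow> bool" for Y :: "nat set" where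
  zero: "orec Y (\<lambda>n. Some 0)"
| succ: "orec Y (\<lambda>n. Some (Suc n))"
| left: "orec Y (\<lambda>n. Some (fst (prod_decode n)))"
| right: "orec Y (\<lambda>n. Some (snd (prod_decode n)))"
| orc: "orec Y (\<lambda>n. Some (if n \<in> Y then 1 else 0))"
| comp: "orec Y f \<Longrightarrow> orec Y g \<Longrightarrow> orec Y (\<lambda>n. Option.bind (g n) f)"
| pair: "orec Y f \<Longrightarrow> orec Y g \<Longrightarrow>
          orec Y (\<lambda>n. Option.bind (f n) (\<lambda>a. Option.bind (g n) (\<lambda>b. Some (prod_encode (a, b)))))"
| prim: "orec Y f \<Longrightarrow> orec Y g \<Longrightarrow>
          orec Y (\<lambda>n. prim_iter f g (fst (prod_decode n)) (snd (prod_decode n)))"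
| mu: "orec Y f \<Longrightarrow> orec Y (mu_op f)"

definition computable_in :: "nat set \<Rightarrow> (nat \<Rightarrow> nat) \<Rightarrow> bool" where
  "computable_in Y d \<longleftrightarrow> (\<exists>f. orec Y f \<and> (\<forall>n. f n = Some (d n)))"

definition turing_le :: "nat set \<Rightarrow> nat set \<Rightarrow> bool" where
  "turing_le X Y \<longleftrightarrow> computable_in Y (\<lambda>n. if n \<in> X then 1 else 0)"

definition ce_rel_in :: "nat set \<Rightarrow> (nat \<times> nat) set \<Rightarrow> bool" where
  "ce_rel_in Y R \<longleftrightarrow> (\<exists>f. orec Y f \<and> (\<forall>n m. (n, m) \<in> R \<longleftrightarrow> f (prod_encode (n, m)) \<noteq> None))"

definition partial_numbering :: "(nat \<Rightarrow> 'a option) \<Rightarrow> bool" where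
  "partial_numbering \<gamma> \<longleftrightarrow> (\<forall>a. \<exists>n. \<gamma> n = Some a)"

definition ce_inequivalence_in :: "nat set \<Rightarrow> (nat \<Rightarrow> 'a option) \<Rightarrow> bool" where
  "ce_inequivalence_in Y \<gamma> \<longleftrightarrow>
     (\<exists>R. ce_rel_in Y R \<and>
        (\<forall>n m. \<gamma> n \<noteq> None \<and> \<gamma> m \<noteq> None \<longrightarrow> ((n, m) \<in> R \<longleftrightarrow> \<gamma> n \<noteq> \<gamma> m)))"

definition decider :: "(nat \<Rightarrow> 'a option) \<Rightarrow> 'a \<Rightarrow> 'a \<Rightarrow> nat set \<Rightarrow> (nat \<Rightarrow> nat) \<Rightarrow> bool" where
  "decider \<gamma> a_bot a_top X d \<longleftrightarrow>
     (\<forall>n. (n \<notin> X \<longrightarrow> \<gamma> (d n) = Some a_bot) \<and> (n \<in> X \<longrightarrow> \<gamma> (d n) = Some a_top))"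

end

theory Submission
  imports Defs
begin

text \<open>Since \<open>a_bot \<noteq> a_top\<close>, a number \<open>n\<close> lies in \<open>X\<close> iff \<open>\<gamma> (d n)\<close> differs from \<open>a_bot\<close>,
  and lies outside \<open>X\<close> iff \<open>\<gamma> (d n)\<close> differs from \<open>a_top\<close>. With fixed indices of \<open>a_bot\<close> and
  \<open>a_top\<close>, the \<open>Y\<close>-c.e. inequivalence relation composed with \<open>d\<close> thus enumerates both \<open>X\<close> and
  its complement, and Post's theorem relative to \<open>Y\<close> gives \<open>X \<le>\<^sub>T Y\<close>. For Post's theorem, every \<open>Y\<close>-partial recursive function gets a \<open>Y\<close>-computable
  approximation by stages, and a \<open>\<mu>\<close>-search finds a stage at which one of the two enumerations
  has accepted \<open>n\<close>.\<close>

abbreviation pfst :: "nat \<Rightarrow> nat" where "pfst n \<equiv> fst (prod_decode n)"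
abbreviation psnd :: "nat \<Rightarrow> nat" where "psnd n \<equiv> snd (prod_decode n)"

lemma computable_in_iff_orec: "computable_in Y h \<longleftrightarrow> orec Y (\<lambda>n. Some (h n))"
proof
  assume "computable_in Y h"
  then obtain f where "orec Y f" and "\<forall>n. f n = Some (h n)"
    unfolding computable_in_def by blast
  then have "f = (\<lambda>n. Some (h n))"
    by auto
  with \<open>orec Y f\<close> show "orec Y (\<lambda>n. Some (h n))"
    by simp
qed (auto simp: computable_in_def)

lemma computable_in_comp:
  assumes "computable_in Y h" and "computable_in Y g"
  shows "computable_in Y (\<lambda>n. h (g n))"
  using orec.comp[of Y "\<lambda>n. Some (h n)" "\<lambda>n. Some (g n)"] assms
  by (simp add: computable_in_iff_orec)

lemma computable_in_pair:
  assumes "computable_in Y f" and "computable_in Y g"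
  shows "computable_in Y (\<lambda>n. prod_encode (f n, g n))"
  using orec.pair[of Y "\<lambda>n. Some (f n)" "\<lambda>n. Some (g n)"] assms
  by (simp add: computable_in_iff_orec)

lemma computable_in_fst: "computable_in Y f \<Longrightarrow> computable_in Y (\<lambda>n. pfst (f n))"
  using computable_in_comp[of Y pfst f] orec.left by (simp add: computable_in_iff_orec)

lemma computable_in_snd: "computable_in Y f \<Longrightarrow> computable_in Y (\<lambda>n. psnd (f n))"
  using computable_in_comp[of Y psnd f] orec.right by (simp add: computable_in_iff_orec)

lemma computable_in_Suc: "computable_in Y f \<Longrightarrow> computable_in Y (\<lambda>n. Suc (f n))"
  using computable_in_comp[of Y Suc f] orec.succ by (simp add: computable_in_iff_orec)

lemma computable_in_id: "computable_in Y (\<lambda>n. n)"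
  using computable_in_pair[of Y pfst psnd] orec.left orec.right
  by (simp add: computable_in_iff_orec)

lemma computable_in_const: "computable_in Y (\<lambda>n. c)"
proof (induction c)
  case 0
  show ?case using orec.zero computable_in_iff_orec by blast
next
  case (Suc c)
  then show ?case by (rule computable_in_Suc)
qed

fun prim_rec :: "(nat \<Rightarrow> nat) \<Rightarrow> (nat \<Rightarrow> nat \<Rightarrow> nat \<Rightarrow> nat) \<Rightarrow> nat \<Rightarrow> nat \<Rightarrow> nat" where
  "prim_rec F G x 0 = F x"
| "prim_rec F G x (Suc k) = G x k (prim_rec F G x k)"

lemma prim_iter_total:
  "prim_iter (\<lambda>n. Some (F n)) (\<lambda>q. Some (G (pfst q) (pfst (psnd q)) (psnd (psnd q)))) x k =
     Some (prim_rec F G x k)"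
  by (induction k) auto

lemma computable_in_prim_rec:
  assumes "computable_in Y F"
    and "computable_in Y (\<lambda>q. G (pfst q) (pfst (psnd q)) (psnd (psnd q)))"
    and "computable_in Y x" and "computable_in Y k"
  shows "computable_in Y (\<lambda>n. prim_rec F G (x n) (k n))"
proof -
  have "computable_in Y (\<lambda>n. prim_rec F G (pfst n) (psnd n))"
    using orec.prim[OF assms(1,2)[unfolded computable_in_iff_orec]]
    by (simp add: computable_in_iff_orec prim_iter_total)
  from computable_in_comp[OF this computable_in_pair[OF assms(3,4)]] show ?thesis
    by simp
qed

lemma computable_in_case_nat:
  assumes "computable_in Y c" and "computable_in Y a"
    and "computable_in Y (\<lambda>p. b (pfst p) (psnd p))"
  shows "computable_in Y (\<lambda>n. case c n of 0 \<Rightarrow> a n | Suc j \<Rightarrow> b n j)"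
proof -
  have "computable_in Y (\<lambda>n. prim_rec a (\<lambda>x j r. b x j) n (c n))"
    using computable_in_comp[OF assms(3) computable_in_pair[OF computable_in_fst computable_in_fst]]
      computable_in_id computable_in_snd
    by (intro computable_in_prim_rec assms(1,2)) simp_all
  moreover have "prim_rec a (\<lambda>x j r. b x j) n (c n) = (case c n of 0 \<Rightarrow> a n | Suc j \<Rightarrow> b n j)" for n
    by (cases "c n") auto
  ultimately show ?thesis by simp
qed

lemmas computable_in_intros =
  computable_in_id computable_in_const computable_in_fst computable_in_snd computable_in_Suc
  computable_in_pair computable_in_case_nat computable_in_prim_rec

lemma orec_comp_computable_in:
  assumes "orec Y f" and "computable_in Y h"
  shows "orec Y (\<lambda>n. f (h n))"
  using orec.comp[OF assms(1) assms(2)[unfolded computable_in_iff_orec]] by simp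

text \<open>\<open>h (prod_encode (x, t)) = Suc v\<close> records that by stage \<open>t\<close> the computation of \<open>f x\<close> has
  been seen to halt with value \<open>v\<close>; the value \<open>0\<close> means that nothing has been seen yet.\<close>

definition stage_approx :: "nat set \<Rightarrow> (nat \<Rightarrow> nat option) \<Rightarrow> (nat \<Rightarrow> nat) \<Rightarrow> bool" where
  "stage_approx Y f h \<longleftrightarrow> computable_in Y h \<and>
     (\<forall>x t v. h (prod_encode (x, t)) = Suc v \<longrightarrow> f x = Some v) \<and>
     (\<forall>x v. f x = Some v \<longrightarrow> (\<forall>\<^sub>F t in sequentially. h (prod_encode (x, t)) = Suc v))"

lemma stage_approx_computable: "stage_approx Y f h \<Longrightarrow> computable_in Y h"
  by (simp add: stage_approx_def)

lemma stage_approx_sound: "stage_approx Y f h \<Longrightarrow> h (prod_encode (x, t)) = Suc v \<Longrightarrow> f x = Some v"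
  by (simp add: stage_approx_def)

lemma stage_approx_eventually:
  "stage_approx Y f h \<Longrightarrow> f x = Some v \<Longrightarrow> \<forall>\<^sub>F t in sequentially. h (prod_encode (x, t)) = Suc v"
  by (simp add: stage_approx_def)

lemma total_orec_has_stage_approx:
  assumes "orec Y (\<lambda>n. Some (F n))"
  shows "\<exists>h. stage_approx Y (\<lambda>n. Some (F n)) h"
proof
  from assms have "computable_in Y (\<lambda>p. Suc (F (pfst p)))"
    by (intro computable_in_Suc computable_in_comp[OF _ computable_in_fst[OF computable_in_id]])
      (simp add: computable_in_iff_orec)
  then show "stage_approx Y (\<lambda>n. Some (F n)) (\<lambda>p. Suc (F (pfst p)))"
    by (simp add: stage_approx_def)
qed

lemma stage_approx_comp:
  assumes f: "stage_approx Y f hf" and g: "stage_approx Y g hg"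
  shows "\<exists>h. stage_approx Y (\<lambda>n. Option.bind (g n) f) h"
proof
  let ?h = "\<lambda>p. case hg p of 0 \<Rightarrow> 0 | Suc w \<Rightarrow> hf (prod_encode (w, psnd p))"
  show "stage_approx Y (\<lambda>n. Option.bind (g n) f) ?h"
    unfolding stage_approx_def
  proof (intro conjI allI impI)
    show "computable_in Y ?h"
      by (intro computable_in_intros computable_in_comp[OF stage_approx_computable[OF f]]
          stage_approx_computable[OF g])
  next
    fix x t v
    assume "?h (prod_encode (x, t)) = Suc v"
    then show "Option.bind (g x) f = Some v"
      by (auto split: nat.splits dest!: stage_approx_sound[OF f] stage_approx_sound[OF g])
  next
    fix x v
    assume "Option.bind (g x) f = Some v"
    then obtain w where "g x = Some w" and "f w = Some v"
      by (cases "g x") auto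
    then have "\<forall>\<^sub>F t in sequentially. hg (prod_encode (x, t)) = Suc w \<and> hf (prod_encode (w, t)) = Suc v"
      by (intro eventually_conj stage_approx_eventually[OF g] stage_approx_eventually[OF f])
    then show "\<forall>\<^sub>F t in sequentially. ?h (prod_encode (x, t)) = Suc v"
      by (rule eventually_mono) simp
  qed
qed

lemma stage_approx_pair:
  assumes f: "stage_approx Y f hf" and g: "stage_approx Y g hg"
  shows "\<exists>h. stage_approx Y
    (\<lambda>n. Option.bind (f n) (\<lambda>a. Option.bind (g n) (\<lambda>b. Some (prod_encode (a, b))))) h"
proof
  let ?h = "\<lambda>p. case hf p of 0 \<Rightarrow> 0 | Suc a \<Rightarrow> (case hg p of 0 \<Rightarrow> 0 | Suc b \<Rightarrow> Suc (prod_encode (a, b)))"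
  show "stage_approx Y (\<lambda>n. Option.bind (f n) (\<lambda>a. Option.bind (g n) (\<lambda>b. Some (prod_encode (a, b))))) ?h"
    unfolding stage_approx_def
  proof (intro conjI allI impI)
    show "computable_in Y ?h"
      by (intro computable_in_intros computable_in_comp[OF stage_approx_computable[OF f]]
          computable_in_comp[OF stage_approx_computable[OF g]])
  next
    fix x t v
    assume "?h (prod_encode (x, t)) = Suc v"
    then show "Option.bind (f x) (\<lambda>a. Option.bind (g x) (\<lambda>b. Some (prod_encode (a, b)))) = Some v"
      by (auto split: nat.splits dest!: stage_approx_sound[OF f] stage_approx_sound[OF g])
  next
    fix x v
    assume "Option.bind (f x) (\<lambda>a. Option.bind (g x) (\<lambda>b. Some (prod_encode (a, b)))) = Some v"
    then obtain a b where "f x = Some a" and "g x = Some b" and "v = prod_encode (a, b)"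
      by (cases "f x"; cases "g x") auto
    moreover from calculation
    have "\<forall>\<^sub>F t in sequentially. hf (prod_encode (x, t)) = Suc a \<and> hg (prod_encode (x, t)) = Suc b"
      by (intro eventually_conj stage_approx_eventually[OF g] stage_approx_eventually[OF f])
    ultimately show "\<forall>\<^sub>F t in sequentially. ?h (prod_encode (x, t)) = Suc v"
      by (auto elim: eventually_mono)
  qed
qed

definition prim_iter_stage :: "(nat \<Rightarrow> nat) \<Rightarrow> (nat \<Rightarrow> nat) \<Rightarrow> nat \<Rightarrow> nat \<Rightarrow> nat \<Rightarrow> nat" where
  "prim_iter_stage hf hg x t = prim_rec hf
     (\<lambda>x' k r. case r of 0 \<Rightarrow> 0
        | Suc r' \<Rightarrow> hg (prod_encode (prod_encode (pfst x', prod_encode (k, r')), psnd x')))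
     (prod_encode (x, t))"

lemma prim_iter_stage_0 [simp]: "prim_iter_stage hf hg x t 0 = hf (prod_encode (x, t))"
  by (simp add: prim_iter_stage_def)

lemma prim_iter_stage_Suc [simp]:
  "prim_iter_stage hf hg x t (Suc k) = (case prim_iter_stage hf hg x t k of 0 \<Rightarrow> 0
     | Suc r \<Rightarrow> hg (prod_encode (prod_encode (x, prod_encode (k, r)), t)))"
  by (simp add: prim_iter_stage_def)

lemma prim_iter_stage_sound:
  assumes f: "stage_approx Y f hf" and g: "stage_approx Y g hg"
  shows "prim_iter_stage hf hg x t k = Suc v \<Longrightarrow> prim_iter f g x k = Some v"
proof (induction k arbitrary: v)
  case 0
  then show ?case
    by (simp add: stage_approx_sound[OF f])
next
  case (Suc k)
  then obtain r where "prim_iter_stage hf hg x t k = Suc r"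
    and "hg (prod_encode (prod_encode (x, prod_encode (k, r)), t)) = Suc v"
    by (auto split: nat.splits)
  then show ?case
    using Suc.IH stage_approx_sound[OF g] by simp
qed

lemma prim_iter_stage_eventually:
  assumes f: "stage_approx Y f hf" and g: "stage_approx Y g hg"
  shows "prim_iter f g x k = Some v \<Longrightarrow> \<forall>\<^sub>F t in sequentially. prim_iter_stage hf hg x t k = Suc v"
proof (induction k arbitrary: v)
  case 0
  then show ?case
    by (simp add: stage_approx_eventually[OF f])
next
  case (Suc k)
  then obtain r where "prim_iter f g x k = Some r" and "g (prod_encode (x, prod_encode (k, r))) = Some v"
    by (cases "prim_iter f g x k") auto
  then have "\<forall>\<^sub>F t in sequentially. prim_iter_stage hf hg x t k = Suc r \<and>
      hg (prod_encode (prod_encode (x, prod_encode (k, r)), t)) = Suc v"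
    by (intro eventually_conj Suc.IH stage_approx_eventually[OF g])
  then show ?case
    by (rule eventually_mono) simp
qed

lemma stage_approx_prim_iter:
  assumes f: "stage_approx Y f hf" and g: "stage_approx Y g hg"
  shows "stage_approx Y (\<lambda>n. prim_iter f g (pfst n) (psnd n))
    (\<lambda>p. prim_iter_stage hf hg (pfst (pfst p)) (psnd p) (psnd (pfst p)))"
  unfolding stage_approx_def
proof (intro conjI allI impI)
  show "computable_in Y (\<lambda>p. prim_iter_stage hf hg (pfst (pfst p)) (psnd p) (psnd (pfst p)))"
    unfolding prim_iter_stage_def
    by (intro computable_in_intros computable_in_comp[OF stage_approx_computable[OF g]]
        stage_approx_computable[OF f])
qed (auto intro: prim_iter_stage_sound[OF f g] prim_iter_stage_eventually[OF f g])

lemma mu_op_eq_Some_iff: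
  "mu_op f x = Some v \<longleftrightarrow>
     f (prod_encode (x, v)) = Some 0 \<and> (\<forall>m<v. \<exists>w. f (prod_encode (x, m)) = Some (Suc w))"
proof -
  define P where "P n \<longleftrightarrow> f (prod_encode (x, n)) = Some 0 \<and> (\<forall>m<n. f (prod_encode (x, m)) \<noteq> None)" for n
  have mu: "mu_op f x = (if \<exists>n. P n then Some (LEAST n. P n) else None)"
    by (simp add: mu_op_def P_def)
  show ?thesis
  proof (intro iffI conjI allI impI)
    assume "mu_op f x = Some v"
    then have "\<exists>n. P n"
      by (metis mu option.distinct(1))
    with \<open>mu_op f x = Some v\<close> have v: "v = (LEAST n. P n)"
      by (simp add: mu)
    with \<open>\<exists>n. P n\<close> have "P v"
      by (auto intro: LeastI_ex)
    then show "f (prod_encode (x, v)) = Some 0"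
      by (simp add: P_def)
    fix m
    assume "m < v"
    with \<open>P v\<close> have defined: "f (prod_encode (x, m')) \<noteq> None" if "m' \<le> m" for m'
      using that by (simp add: P_def)
    moreover have "\<not> P m"
      using \<open>m < v\<close> v not_less_Least by blast
    ultimately have "f (prod_encode (x, m)) \<noteq> Some 0"
      by (simp add: P_def)
    with defined[of m] show "\<exists>w. f (prod_encode (x, m)) = Some (Suc w)"
      by (cases "f (prod_encode (x, m))") (auto simp: not0_implies_Suc)
  next
    assume R: "f (prod_encode (x, v)) = Some 0 \<and> (\<forall>m<v. \<exists>w. f (prod_encode (x, m)) = Some (Suc w))"
    then have "P v"
      by (fastforce simp: P_def)
    moreover have "v \<le> n" if "P n" for n
      using R that by (metis P_def leI nat.distinct(1) option.inject)
    ultimately have "(LEAST n. P n) = v"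
      by (rule Least_equality)
    with \<open>P v\<close> show "mu_op f x = Some v"
      by (auto simp: mu)
  qed
qed

definition least_zero_below :: "(nat \<Rightarrow> nat) \<Rightarrow> nat \<Rightarrow> nat" where
  "least_zero_below c k = (if \<exists>m<k. c m = 0 then Suc (LEAST m. c m = 0) else 0)"

lemma least_zero_below_0 [simp]: "least_zero_below c 0 = 0"
  by (simp add: least_zero_below_def)

lemma least_zero_below_Suc [simp]:
  "least_zero_below c (Suc k) =
     (case least_zero_below c k of 0 \<Rightarrow> (case c k of 0 \<Rightarrow> Suc k | Suc _ \<Rightarrow> 0) | Suc m \<Rightarrow> Suc m)"
proof (cases "\<exists>m<k. c m = 0")
  case True
  then have "\<exists>m<Suc k. c m = 0"
    using less_SucI by blast
  with True show ?thesis
    by (simp add: least_zero_below_def)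
next
  case False
  then have below: "least_zero_below c k = 0"
    by (simp add: least_zero_below_def)
  show ?thesis
  proof (cases "c k")
    case 0
    have "(LEAST m. c m = 0) = k"
    proof (rule Least_equality)
      show "k \<le> m" if "c m = 0" for m
        using False that leI by blast
    qed (rule 0)
    with 0 show ?thesis
      by (auto simp: least_zero_below_def below)
  next
    case (Suc w)
    with False have "\<not> (\<exists>m<Suc k. c m = 0)"
      using less_Suc_eq by auto
    with Suc show ?thesis
      by (simp add: least_zero_below_def below)
  qed
qed

lemma computable_in_least_zero_below:
  assumes "computable_in Y (\<lambda>p. c (pfst p) (psnd p))" and "computable_in Y k"
  shows "computable_in Y (\<lambda>n. least_zero_below (c n) (k n))"
proof -
  let ?G = "\<lambda>x j r. case r of 0 \<Rightarrow> (case c x j of 0 \<Rightarrow> Suc j | Suc _ \<Rightarrow> 0) | Suc m \<Rightarrow> Suc m"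
  have "least_zero_below (c x) j = prim_rec (\<lambda>_. 0) ?G x j" for x j
    by (induction j) simp_all
  moreover have "computable_in Y (\<lambda>n. c (pfst n) (pfst (psnd n)))"
    using computable_in_comp[OF assms(1) computable_in_pair[OF computable_in_fst computable_in_fst]]
      computable_in_id computable_in_snd
    by simp
  then have "computable_in Y (\<lambda>n. prim_rec (\<lambda>_. 0) ?G n (k n))"
    by (intro computable_in_intros assms)
  ultimately show ?thesis
    by simp
qed

text \<open>At stage \<open>t\<close>, \<open>mu_stage\<close> looks for the first \<open>m < t\<close> for which \<open>f (x, m)\<close> has not yet
  been seen to be positive, and succeeds if \<open>f (x, m)\<close> has been seen to be \<open>0\<close> there.\<close>

definition mu_probe :: "(nat \<Rightarrow> nat) \<Rightarrow> nat \<Rightarrow> nat \<Rightarrow> nat \<Rightarrow> nat" where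
  "mu_probe hf x t m = (case hf (prod_encode (prod_encode (x, m), t)) of
     0 \<Rightarrow> 0 | Suc w \<Rightarrow> (case w of 0 \<Rightarrow> 0 | Suc _ \<Rightarrow> 1))"

definition mu_stage :: "(nat \<Rightarrow> nat) \<Rightarrow> nat \<Rightarrow> nat \<Rightarrow> nat" where
  "mu_stage hf x t = (case least_zero_below (mu_probe hf x t) t of 0 \<Rightarrow> 0
     | Suc m \<Rightarrow> (case hf (prod_encode (prod_encode (x, m), t)) of
         0 \<Rightarrow> 0 | Suc w \<Rightarrow> (case w of 0 \<Rightarrow> Suc m | Suc _ \<Rightarrow> 0)))"

lemma mu_stage_sound:
  assumes f: "stage_approx Y f hf" and "mu_stage hf x t = Suc v"
  shows "mu_op f x = Some v"
proof -
  from assms(2) have first: "least_zero_below (mu_probe hf x t) t = Suc v"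
    and seen_zero: "hf (prod_encode (prod_encode (x, v), t)) = Suc 0"
    by (auto simp: mu_stage_def split: nat.splits)
  from stage_approx_sound[OF f seen_zero] have "f (prod_encode (x, v)) = Some 0" .
  moreover have "\<exists>w. f (prod_encode (x, m)) = Some (Suc w)" if "m < v" for m
  proof -
    from first have "v = (LEAST m. mu_probe hf x t m = 0)"
      by (simp add: least_zero_below_def split: if_splits)
    with that have "mu_probe hf x t m \<noteq> 0"
      using not_less_Least by blast
    then obtain w where "hf (prod_encode (prod_encode (x, m), t)) = Suc (Suc w)"
      by (auto simp: mu_probe_def split: nat.splits)
    then show ?thesis
      using stage_approx_sound[OF f] by blast
  qed
  ultimately show ?thesis
    by (simp add: mu_op_eq_Some_iff)
qed

lemma mu_stage_eventually:
  assumes f: "stage_approx Y f hf" and "mu_op f x = Some v"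
  shows "\<forall>\<^sub>F t in sequentially. mu_stage hf x t = Suc v"
proof -
  from assms(2) have zero: "f (prod_encode (x, v)) = Some 0"
    and pos: "\<forall>m<v. \<exists>w. f (prod_encode (x, m)) = Some (Suc w)"
    by (simp_all add: mu_op_eq_Some_iff)
  have defined: "f (prod_encode (x, m)) = Some (the (f (prod_encode (x, m))))" if "m \<le> v" for m
  proof (cases "m = v")
    case False
    with that have "m < v"
      by simp
    with pos obtain w where "f (prod_encode (x, m)) = Some (Suc w)"
      by blast
    then show ?thesis
      by simp
  qed (simp add: zero)
  have "\<forall>\<^sub>F t in sequentially. \<forall>m\<in>{..v}.
      hf (prod_encode (prod_encode (x, m), t)) = Suc (the (f (prod_encode (x, m))))"
    by (intro eventually_ball_finite finite_atMost ballI stage_approx_eventually[OF f] defined) simp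
  moreover have "\<forall>\<^sub>F t in sequentially. v < t"
    by simp
  ultimately show ?thesis
  proof (rule eventually_elim2)
    fix t
    assume seen: "\<forall>m\<in>{..v}. hf (prod_encode (prod_encode (x, m), t)) = Suc (the (f (prod_encode (x, m))))"
      and "v < t"
    have "mu_probe hf x t v = 0"
      using seen zero by (simp add: mu_probe_def)
    have below: "mu_probe hf x t m \<noteq> 0" if "m < v" for m
    proof -
      from pos that obtain w where "f (prod_encode (x, m)) = Some (Suc w)"
        by blast
      with seen that show ?thesis
        by (simp add: mu_probe_def)
    qed
    have "(LEAST m. mu_probe hf x t m = 0) = v"
    proof (rule Least_equality)
      show "v \<le> m" if "mu_probe hf x t m = 0" for m
        using below that leI by blast
    qed fact
    with \<open>mu_probe hf x t v = 0\<close> \<open>v < t\<close> have "least_zero_below (mu_probe hf x t) t = Suc v"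
      by (auto simp: least_zero_below_def)
    with seen zero show "mu_stage hf x t = Suc v"
      by (simp add: mu_stage_def)
  qed
qed

lemma stage_approx_mu:
  assumes f: "stage_approx Y f hf"
  shows "stage_approx Y (mu_op f) (\<lambda>p. mu_stage hf (pfst p) (psnd p))"
  unfolding stage_approx_def
proof (intro conjI allI impI)
  show "computable_in Y (\<lambda>p. mu_stage hf (pfst p) (psnd p))"
    unfolding mu_stage_def mu_probe_def
    by (intro computable_in_intros computable_in_least_zero_below
        computable_in_comp[OF stage_approx_computable[OF f]])
qed (simp_all add: mu_stage_sound[OF f] mu_stage_eventually[OF f])

lemma orec_has_stage_approx: "orec Y f \<Longrightarrow> \<exists>h. stage_approx Y f h"
proof (induction rule: orec.induct)
  case (comp f g)
  then obtain hf hg where hf: "stage_approx Y f hf" and hg: "stage_approx Y g hg"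
    by blast
  from stage_approx_comp[OF hf hg] show ?case .
next
  case (pair f g)
  then obtain hf hg where hf: "stage_approx Y f hf" and hg: "stage_approx Y g hg"
    by blast
  from stage_approx_pair[OF hf hg] show ?case .
next
  case (prim f g)
  then obtain hf hg where hf: "stage_approx Y f hf" and hg: "stage_approx Y g hg"
    by blast
  from stage_approx_prim_iter[OF hf hg] show ?case
    by blast
next
  case (mu f)
  then obtain hf where hf: "stage_approx Y f hf"
    by blast
  from stage_approx_mu[OF hf] show ?case
    by blast
qed (rule total_orec_has_stage_approx, rule orec.intros)+

lemma mu_op_total:
  assumes "c (prod_encode (x, t)) = 0"
  shows "mu_op (\<lambda>p. Some (c p)) x = Some (LEAST t. c (prod_encode (x, t)) = 0)"
proof -
  let ?v = "LEAST t. c (prod_encode (x, t)) = 0"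
  have "c (prod_encode (x, ?v)) = 0"
    using assms by (rule LeastI)
  moreover have "\<exists>w. c (prod_encode (x, m)) = Suc w" if "m < ?v" for m
    using not_less_Least[OF that] not0_implies_Suc by blast
  ultimately show ?thesis
    by (simp add: mu_op_eq_Some_iff)
qed

lemma orec_bind_computable_in:
  assumes "orec Y f" and "computable_in Y c"
  shows "orec Y (\<lambda>n. Option.bind (f n) (\<lambda>v. Some (c (prod_encode (n, v)))))"
proof -
  have "orec Y (\<lambda>n. Option.bind (Some n) (\<lambda>a. Option.bind (f n) (\<lambda>b. Some (prod_encode (a, b)))))"
    using computable_in_id assms(1) unfolding computable_in_iff_orec by (rule orec.pair)
  from orec.comp[OF assms(2)[unfolded computable_in_iff_orec] this] show ?thesis
    by simp
qed

lemma computable_in_search: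
  assumes "computable_in Y c" and "computable_in Y a"
    and "\<And>n. \<exists>t. c (prod_encode (n, t)) = 0"
  shows "computable_in Y (\<lambda>n. a (prod_encode (n, LEAST t. c (prod_encode (n, t)) = 0)))"
proof -
  have "orec Y (\<lambda>n. Option.bind (mu_op (\<lambda>p. Some (c p)) n) (\<lambda>t. Some (a (prod_encode (n, t)))))"
    using orec.mu[OF assms(1)[unfolded computable_in_iff_orec]] assms(2)
    by (rule orec_bind_computable_in)
  moreover have "mu_op (\<lambda>p. Some (c p)) n = Some (LEAST t. c (prod_encode (n, t)) = 0)" for n
  proof -
    from assms(3) obtain t where "c (prod_encode (n, t)) = 0" ..
    then show ?thesis
      by (rule mu_op_total)
  qed
  ultimately show ?thesis
    by (simp add: computable_in_iff_orec)
qed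

lemma stage_approx_halts:
  assumes "stage_approx Y f h" and "f x = Some v"
  shows "\<exists>t. h (prod_encode (x, t)) = Suc v"
  using stage_approx_eventually[OF assms] by (rule eventually_happens'[OF sequentially_bot])

lemma turing_le_if_ce_and_co_ce:
  assumes "orec Y f" and "orec Y g"
    and ce: "\<And>n. n \<in> X \<longleftrightarrow> f n \<noteq> None"
    and co_ce: "\<And>n. n \<notin> X \<longleftrightarrow> g n \<noteq> None"
  shows "turing_le X Y"
proof -
  from orec_has_stage_approx[OF assms(1)] obtain hf where hf: "stage_approx Y f hf" ..
  from orec_has_stage_approx[OF assms(2)] obtain hg where hg: "stage_approx Y g hg" ..
  \<comment> \<open>\<open>halted (prod_encode (n, t)) = 0\<close> iff one of the two enumerations has accepted \<open>n\<close> by stage \<open>t\<close>.\<close>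
  define halted :: "nat \<Rightarrow> nat" where
    "halted p = (case hf p of 0 \<Rightarrow> (case hg p of 0 \<Rightarrow> 1 | Suc _ \<Rightarrow> 0) | Suc _ \<Rightarrow> 0)" for p
  define answer :: "nat \<Rightarrow> nat" where "answer p = (case hf p of 0 \<Rightarrow> 0 | Suc _ \<Rightarrow> 1)" for p
  have halts: "\<exists>t. halted (prod_encode (n, t)) = 0" for n
  proof (cases "n \<in> X")
    case True
    with ce obtain v where "f n = Some v"
      by blast
    from stage_approx_halts[OF hf this] obtain t where "hf (prod_encode (n, t)) = Suc v" ..
    then have "halted (prod_encode (n, t)) = 0"
      by (simp add: halted_def)
    then show ?thesis ..
  next
    case False
    with co_ce obtain v where "g n = Some v"
      by blast
    from stage_approx_halts[OF hg this] obtain t where "hg (prod_encode (n, t)) = Suc v" ..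
    then have "halted (prod_encode (n, t)) = 0"
      by (simp add: halted_def split: nat.split)
    then show ?thesis ..
  qed
  have answer: "answer (prod_encode (n, t)) = (if n \<in> X then 1 else 0)"
    if "halted (prod_encode (n, t)) = 0" for n t
  proof (cases "hf (prod_encode (n, t))")
    case 0
    with that obtain w where "hg (prod_encode (n, t)) = Suc w"
      by (auto simp: halted_def split: nat.splits)
    with co_ce have "n \<notin> X"
      using stage_approx_sound[OF hg] by blast
    with 0 show ?thesis
      by (simp add: answer_def)
  next
    case (Suc w)
    with ce have "n \<in> X"
      using stage_approx_sound[OF hf] by blast
    with Suc show ?thesis
      by (simp add: answer_def)
  qed
  have "computable_in Y halted" and "computable_in Y answer"
    unfolding halted_def answer_def
    by (intro computable_in_intros stage_approx_computable[OF hf] stage_approx_computable[OF hg])+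
  from computable_in_search[OF this halts]
  have "computable_in Y (\<lambda>n. answer (prod_encode (n, LEAST t. halted (prod_encode (n, t)) = 0)))" .
  moreover have "answer (prod_encode (n, LEAST t. halted (prod_encode (n, t)) = 0)) = (if n \<in> X then 1 else 0)"
    for n
  proof (rule answer)
    from halts[of n] show "halted (prod_encode (n, LEAST t. halted (prod_encode (n, t)) = 0)) = 0"
      by (rule LeastI_ex)
  qed
  ultimately show ?thesis
    by (simp add: turing_le_def)
qed

lemma decider_value:
  "decider \<gamma> a_bot a_top X d \<Longrightarrow> \<gamma> (d n) = Some (if n \<in> X then a_top else a_bot)"
  by (simp add: decider_def)

theorem theorem3p7:
  fixes X Y :: "nat set"
    and app :: "'a \<Rightarrow> 'a \<Rightarrow> 'a option" and s k :: 'a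
    and a_bot a_top :: 'a
    and \<gamma> :: "nat \<Rightarrow> 'a option"
    and d :: "nat \<Rightarrow> nat"
  assumes "pca app s k"
    and "a_bot \<noteq> a_top"
    and "partial_numbering \<gamma>"
    and "computable_in Y d"
    and "decider \<gamma> a_bot a_top X d"
    and "ce_inequivalence_in Y \<gamma>"
  shows "turing_le X Y"
proof -
  obtain n_bot n_top where bot: "\<gamma> n_bot = Some a_bot" and top: "\<gamma> n_top = Some a_top"
    using assms(3) unfolding partial_numbering_def by blast
  obtain R where "ce_rel_in Y R"
    and R: "\<And>n m. \<gamma> n \<noteq> None \<Longrightarrow> \<gamma> m \<noteq> None \<Longrightarrow> (n, m) \<in> R \<longleftrightarrow> \<gamma> n \<noteq> \<gamma> m"
    using assms(6) unfolding ce_inequivalence_in_def by blast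
  then obtain fR where "orec Y fR" and fR: "\<And>n m. (n, m) \<in> R \<longleftrightarrow> fR (prod_encode (n, m)) \<noteq> None"
    unfolding ce_rel_in_def by blast
  have "(d n, n_bot) \<in> R \<longleftrightarrow> n \<in> X" and "(d n, n_top) \<in> R \<longleftrightarrow> n \<notin> X" for n
    using R[of "d n"] bot top decider_value[OF assms(5), of n] assms(2) by simp_all
  then have ce: "n \<in> X \<longleftrightarrow> fR (prod_encode (d n, n_bot)) \<noteq> None"
    and co_ce: "n \<notin> X \<longleftrightarrow> fR (prod_encode (d n, n_top)) \<noteq> None" for n
    unfolding fR by simp_all
  have "orec Y (\<lambda>n. fR (prod_encode (d n, m)))" for m
    using \<open>orec Y fR\<close> computable_in_pair[OF assms(4) computable_in_const]
    by (rule orec_comp_computable_in)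
  from this this ce co_ce show ?thesis
    by (rule turing_le_if_ce_and_co_ce)
qed

end
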